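(* Let $n\geq 3$ and let $k\in\mathbb{Z}_n$ with $k\neq 0$ and $2k\not\equiv 0\pmod n$. Let $C$ be a subset of the vertex set of the generalized Petersen graph $\mathrm{GP}(n,k)$. Then $C$ is a perfect code in $\mathrm{GP}(n,k)$ if and only if $n\equiv 0\pmod 4$, $k\equiv 1\pmod 2$, and $$C=\{u_{4i+j},\,v_{4i+j+2}\mid i\in\mathbb{Z}_n\}$$ for some $j\in\{0,1,2,3\}$ (indices taken modulo $n$).
   Context: For an integer $n\geq 3$ and a nonzero $k\in\mathbb{Z}_n$, the generalized Petersen graph $\mathrm{GP}(n,k)$ is the simple graph with vertex set $\{u_i,v_i\mid i\in\mathbb{Z}_n\}$ ($2n$ vertices) and edges $u_iu_{i+1}$, $u_iv_i$, $v_iv_{i+k}$ for all $i\in\mathbb{Z}_n$ (all indices modulo $n$). Standing assumption: $2k\not\equiv 0\pmod n$, so that $\mathrm{GP}(n,k)$ is 3-regular. Since $k$ is only defined modulo $n$, a congruence such as $k\equiv 1\pmod 2$ with $n$ even is well defined. A perfect code in a graph $\Gamma$ is an independent set $C\subseteq V(\Gamma)$ such that every vertex not in $C$ is adjacent to exactly one vertex of $C$. *)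

theory Defs
  imports Main
begin

text \<open>Vertices of GP(n,k): outer vertices u_i and inner vertices v_i, i in Z_n
  represented by 0..n-1.\<close>
datatype gpv = U nat | V nat

definition gp_verts :: "nat \<Rightarrow> gpv set" where
  "gp_verts n = {U i | i. i < n} \<union> {V i | i. i < n}"

definition gp_edge :: "nat \<Rightarrow> nat \<Rightarrow> gpv \<Rightarrow> gpv \<Rightarrow> bool" where
  "gp_edge n k x y \<longleftrightarrow> (\<exists>i<n.
      (x = U i \<and> y = U ((i + 1) mod n)) \<or>
      (x = U i \<and> y = V i) \<or>
      (x = V i \<and> y = V ((i + k) mod n)))"

definition gp_adj :: "nat \<Rightarrow> nat \<Rightarrow> gpv \<Rightarrow> gpv \<Rightarrow> bool" where
  "gp_adj n k x y \<longleftrightarrow> gp_edge n k x y \<or> gp_edge n k y x"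

definition perfect_code :: "gpv set \<Rightarrow> (gpv \<Rightarrow> gpv \<Rightarrow> bool) \<Rightarrow> gpv set \<Rightarrow> bool" where
  "perfect_code Vs adj C \<longleftrightarrow> C \<subseteq> Vs \<and>
     (\<forall>x\<in>C. \<forall>y\<in>C. \<not> adj x y) \<and>
     (\<forall>x\<in>Vs - C. \<exists>!c. c \<in> C \<and> adj x c)"

end

theory Submission
  imports Defs
begin

text \<open>A perfect code of the cubic graph \<open>GP(n, k)\<close> meets every closed neighbourhood exactly once.
  With \<open>f\<close> and \<open>h\<close> the indicators of the code on the outer and inner rim, summing these
  conditions over a period gives \<open>3|f| + |h| = n = |f| + 3|h|\<close>, hence \<open>n = 4|f|\<close>. Comparing
  two overlapping outer neighbourhoods shows that the number of adjacent inner code pairs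
  \<open>v(i), v(i + 1)\<close> equals the number of outer code pairs \<open>u(i), u(i + 3)\<close>. On the other hand
  an inner pair starting at \<open>i + 1\<close> or at \<open>i + 1 + 2k\<close> forces the outer pair starting at
  \<open>i + k\<close>, and not both occur, so twice the first number is at most the second. Both numbers
  therefore vanish, which pins the outer code down to one residue class mod 4, the inner code to
  the class two further on, and forces \<open>k\<close> to be odd. Conversely these residue patterns satisfy
  all neighbourhood conditions.\<close>

lemma sum_periodic_shift:
  fixes g :: "nat \<Rightarrow> 'a::cancel_comm_monoid_add"
  assumes "\<And>i. g (i + p) = g i"
  shows "(\<Sum>i<p. g (i + c)) = (\<Sum>i<p. g i)"
proof (induction c)
  case (Suc c)
  have "g c + (\<Sum>i<p. g (Suc i + c)) = (\<Sum>i<Suc p. g (i + c))"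
    by (subst sum.lessThan_Suc_shift) simp
  also have "\<dots> = g c + (\<Sum>i<p. g (i + c))"
    using assms[of c] by (simp add: add.commute)
  finally show ?case using Suc by simp
qed simp

lemma periodic_mod_eq:
  fixes g :: "nat \<Rightarrow> 'a"
  assumes "\<And>i. g (i + p) = g i"
  shows "g (i mod p) = g i"
proof -
  have "g (i mod p + p * m) = g (i mod p)" for m
  proof (induction m)
    case (Suc m)
    then show ?case using assms[of "i mod p + p * m"] by (simp add: ac_simps)
  qed simp
  from this[of "i div p"] show ?thesis by simp
qed

lemma periodic_sum_nonneg_eq_0:
  fixes g :: "nat \<Rightarrow> 'a::ordered_comm_monoid_add"
  assumes "0 < p" "\<And>i. g (i + p) = g i" "\<And>i. 0 \<le> g i" "(\<Sum>i<p. g i) = 0"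
  shows "g i = 0"
proof -
  have "g (i mod p) = 0"
    using assms(1,3,4) sum_nonneg_eq_0_iff[of "{..<p}" g] by simp
  then show ?thesis
    using periodic_mod_eq[of g p, OF assms(2)] by simp
qed

lemma of_bool_sum4_eq_1_iff:
  "of_bool a + of_bool b + of_bool c + of_bool d = (1::int) \<longleftrightarrow>
    (a \<or> b \<or> c \<or> d) \<and> \<not> (a \<and> b) \<and> \<not> (a \<and> c) \<and> \<not> (a \<and> d) \<and> \<not> (b \<and> c) \<and> \<not> (b \<and> d) \<and> \<not> (c \<and> d)"
  by (cases a; cases b; cases c; cases d) simp_all

lemma of_bool_overlapping_windows:
  "of_bool a + of_bool b + of_bool c + of_bool x = (1::int) \<Longrightarrow>
   of_bool b + of_bool c + of_bool d + of_bool y = (1::int) \<Longrightarrow>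
   of_bool (x \<and> y) - of_bool (a \<and> d) = (1::int) - of_bool a - of_bool b - of_bool c - of_bool d"
  by (cases a; cases b; cases c; cases d; cases x; cases y) simp_all

lemma of_bool_pairs_le_gap:
  "of_bool g1 + of_bool f1 + of_bool q1 + of_bool p1 = (1::int) \<Longrightarrow>
   of_bool g2 + of_bool f2 + of_bool q2 + of_bool p2 = (1::int) \<Longrightarrow>
   of_bool f0 + of_bool f1 + of_bool f2 + of_bool g1 = (1::int) \<Longrightarrow>
   of_bool f1 + of_bool f2 + of_bool f3 + of_bool g2 = (1::int) \<Longrightarrow>
   of_bool (p1 \<and> p2) + of_bool (q1 \<and> q2) \<le> (of_bool (f0 \<and> f3) :: int)"
  by (cases f0; cases f1; cases f2; cases f3; cases g1; cases g2;
      cases p1; cases p2; cases q1; cases q2) simp_all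

lemma ex1_mem_4_iff:
  assumes "distinct [a, b, c, d]"
  shows "(\<exists>!x. x \<in> C \<and> x \<in> {a, b, c, d}) \<longleftrightarrow>
    of_bool (a \<in> C) + of_bool (b \<in> C) + of_bool (c \<in> C) + of_bool (d \<in> C) = (1::int)"
  using assms by (cases "a \<in> C"; cases "b \<in> C"; cases "c \<in> C"; cases "d \<in> C"; simp; blast)

lemma mod_less_twice: "(a::nat) < 2 * n \<Longrightarrow> a mod n = (if a < n then a else a - n)"
  by (simp add: le_mod_geq)

lemma eq_add_mod_iff_eq_sub_mod:
  fixes i i' j n :: nat
  assumes "i < n" "i' < n" "j \<le> n"
  shows "i = (i' + j) mod n \<longleftrightarrow> i' = (i + n - j) mod n"
  using assms by (simp add: mod_less_twice) arith

lemma add_multiple_mod: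
  fixes i n m :: nat
  assumes "m dvd n"
  shows "(i + n) mod m = i mod m"
  using assms by (auto elim!: dvdE)

lemma add_sub_multiple_mod:
  fixes n c i m :: nat
  assumes "m dvd n" "c \<le> n"
  shows "((i + n - c) mod m + c mod m) mod m = i mod m"
proof -
  have "(i + n - c + c) mod m = i mod m"
    using add_multiple_mod[OF assms(1)] assms(2) by simp
  then show ?thesis
    by (simp add: mod_add_eq)
qed

lemma less_4_cases: "(r::nat) < 4 \<longleftrightarrow> r = 0 \<or> r = 1 \<or> r = 2 \<or> r = 3"
  by auto

lemma residue_outer_count:
  fixes n i j :: nat
  assumes "4 dvd n" "0 < n" "j < 4"
  shows "of_bool ((i + n - 1) mod 4 = j) + of_bool (i mod 4 = j) + of_bool ((i + 1) mod 4 = j)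
    + of_bool (i mod 4 = (j + 2) mod 4) = (1::int)"
proof -
  have "((i + n - 1) mod 4 + 1) mod 4 = i mod 4"
    using add_sub_multiple_mod[OF assms(1), of 1 i] assms(2) by simp
  moreover have "(i + 1) mod 4 = (i mod 4 + 1) mod 4"
    by (rule mod_add_left_eq[symmetric])
  moreover have "(i + n - 1) mod 4 < 4" "i mod 4 < 4"
    by simp_all
  ultimately show ?thesis
    using assms(3) unfolding less_4_cases by (elim disjE) simp_all
qed

lemma residue_inner_count:
  fixes n k i j :: nat
  assumes "4 dvd n" "k \<le> n" "odd k" "j < 4"
  shows "of_bool (i mod 4 = (j + 2) mod 4) + of_bool (i mod 4 = j)
    + of_bool ((i + k) mod 4 = (j + 2) mod 4) + of_bool ((i + n - k) mod 4 = (j + 2) mod 4) = (1::int)"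
proof -
  have "k mod 4 mod 2 = 1"
    using assms(3) by (simp add: mod_mod_cancel odd_iff_mod_2_eq_one)
  then have "k mod 4 = 1 \<or> k mod 4 = 3"
    using mod_less_divisor[of 4 k] unfolding less_4_cases by auto
  moreover have "((i + n - k) mod 4 + k mod 4) mod 4 = i mod 4"
    using add_sub_multiple_mod[OF assms(1,2)] .
  moreover have "(i + k) mod 4 = (i mod 4 + k mod 4) mod 4"
    by (rule mod_add_eq[symmetric])
  moreover have "(i + n - k) mod 4 < 4" "i mod 4 < 4"
    by simp_all
  ultimately show ?thesis
    using assms(4) unfolding less_4_cases by (elim disjE) simp_all
qed

lemma perfect_code_iff_closed_nbhd:
  assumes irrefl: "\<And>x. \<not> adj x x"
  shows "perfect_code Vs adj C \<longleftrightarrow> C \<subseteq> Vs \<and> (\<forall>x\<in>Vs. \<exists>!c. c \<in> C \<and> (c = x \<or> adj x c))"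
proof
  assume "perfect_code Vs adj C"
  then have sub: "C \<subseteq> Vs" and indep: "\<And>x y. x \<in> C \<Longrightarrow> y \<in> C \<Longrightarrow> \<not> adj x y"
    and dom: "\<And>x. x \<in> Vs - C \<Longrightarrow> \<exists>!c. c \<in> C \<and> adj x c"
    unfolding perfect_code_def by blast+
  have "\<exists>!c. c \<in> C \<and> (c = x \<or> adj x c)" if "x \<in> Vs" for x
  proof (cases "x \<in> C")
    case True
    then show ?thesis using indep by blast
  next
    case False
    then show ?thesis using dom[of x] that by blast
  qed
  with sub show "C \<subseteq> Vs \<and> (\<forall>x\<in>Vs. \<exists>!c. c \<in> C \<and> (c = x \<or> adj x c))" by blast
next
  assume "C \<subseteq> Vs \<and> (\<forall>x\<in>Vs. \<exists>!c. c \<in> C \<and> (c = x \<or> adj x c))"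
  then have sub: "C \<subseteq> Vs" and closed: "\<And>x. x \<in> Vs \<Longrightarrow> \<exists>!c. c \<in> C \<and> (c = x \<or> adj x c)"
    by blast+
  have "\<not> adj x y" if "x \<in> C" "y \<in> C" for x y
    using closed[of x] irrefl[of x] that sub by blast
  moreover have "\<exists>!c. c \<in> C \<and> adj x c" if "x \<in> Vs - C" for x
    using closed[of x] that by blast
  ultimately show "perfect_code Vs adj C"
    unfolding perfect_code_def using sub by blast
qed

lemma gp_adj_U_iff:
  assumes "i < n"
  shows "gp_adj n k (U i) y \<longleftrightarrow> y \<in> {U ((i + n - 1) mod n), U ((i + 1) mod n), V i}"
proof -
  have "(\<exists>i'<n. y = U i' \<and> i = (i' + 1) mod n) \<longleftrightarrow> y = U ((i + n - 1) mod n)"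
    using assms eq_add_mod_iff_eq_sub_mod[OF assms, of _ 1] by auto
  then show ?thesis
    unfolding gp_adj_def gp_edge_def using assms by auto
qed

lemma gp_adj_V_iff:
  assumes "i < n" "k < n"
  shows "gp_adj n k (V i) y \<longleftrightarrow> y \<in> {U i, V ((i + k) mod n), V ((i + n - k) mod n)}"
proof -
  have "(\<exists>i'<n. y = V i' \<and> i = (i' + k) mod n) \<longleftrightarrow> y = V ((i + n - k) mod n)"
    using assms eq_add_mod_iff_eq_sub_mod[OF assms(1), of _ k] by auto
  then show ?thesis
    unfolding gp_adj_def gp_edge_def using assms by auto
qed

lemma gp_adj_irrefl:
  assumes "1 < n" "0 < k" "k < n"
  shows "\<not> gp_adj n k x x"
  using assms unfolding gp_adj_def gp_edge_def by (auto simp: mod_less_twice)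

lemma gp_closed_nbhd_U_count:
  assumes "3 \<le> n" "a < n"
  shows "(\<exists>!c. c \<in> C \<and> (c = U a \<or> gp_adj n k (U a) c)) \<longleftrightarrow>
    of_bool (U ((a + n - 1) mod n) \<in> C) + of_bool (U a \<in> C) + of_bool (U ((a + 1) mod n) \<in> C)
      + of_bool (V a \<in> C) = (1::int)"
proof -
  have "distinct [U ((a + n - 1) mod n), U a, U ((a + 1) mod n), V a]"
    using assms by (auto simp: mod_less_twice)
  moreover have "c = U a \<or> gp_adj n k (U a) c \<longleftrightarrow>
      c \<in> {U ((a + n - 1) mod n), U a, U ((a + 1) mod n), V a}" for c
    using gp_adj_U_iff[OF assms(2)] by auto
  ultimately show ?thesis
    by (simp only: ex1_mem_4_iff)
qed

lemma gp_closed_nbhd_V_count: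
  assumes "0 < k" "k < n" "(2 * k) mod n \<noteq> 0" "a < n"
  shows "(\<exists>!c. c \<in> C \<and> (c = V a \<or> gp_adj n k (V a) c)) \<longleftrightarrow>
    of_bool (V a \<in> C) + of_bool (U a \<in> C) + of_bool (V ((a + k) mod n) \<in> C)
      + of_bool (V ((a + n - k) mod n) \<in> C) = (1::int)"
proof -
  have "2 * k \<noteq> n"
    using assms(3) by auto
  then have "distinct [V a, U a, V ((a + k) mod n), V ((a + n - k) mod n)]"
    using assms by (auto simp: mod_less_twice)
  moreover have "c = V a \<or> gp_adj n k (V a) c \<longleftrightarrow>
      c \<in> {V a, U a, V ((a + k) mod n), V ((a + n - k) mod n)}" for c
    using gp_adj_V_iff[OF assms(4,2)] by auto
  ultimately show ?thesis
    by (simp only: ex1_mem_4_iff)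
qed

text \<open>\<open>f\<close> and \<open>h\<close> stand for the indicators of a vertex set on the outer and the inner rim, indices
  taken mod \<open>n\<close>; \<open>i + n - 1\<close> and \<open>i + n - k\<close> stand for \<open>i - 1\<close> and \<open>i - k\<close>. The two
  equations say that the closed neighbourhoods of \<open>u\<^sub>i\<close> and \<open>v\<^sub>i\<close> each contain exactly one
  vertex of the set.\<close>

locale gp_code_counts =
  fixes n k :: nat and f h :: "nat \<Rightarrow> bool"
  assumes period_pos: "0 < n"
    and f_periodic: "f (i + n) = f i"
    and h_periodic: "h (i + n) = h i"
    and outer_count:
      "of_bool (f (i + n - 1)) + of_bool (f i) + of_bool (f (i + 1)) + of_bool (h i) = (1::int)"
    and inner_count:
      "of_bool (h i) + of_bool (f i) + of_bool (h (i + k)) + of_bool (h (i + n - k)) = (1::int)"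

lemma perfect_code_gp_iff_counts:
  assumes n: "3 \<le> n" and k: "0 < k" "k < n" "(2 * k) mod n \<noteq> 0" and C: "C \<subseteq> gp_verts n"
  shows "perfect_code (gp_verts n) (gp_adj n k) C \<longleftrightarrow>
    gp_code_counts n k (\<lambda>i. U (i mod n) \<in> C) (\<lambda>i. V (i mod n) \<in> C)"
proof -
  define f where "f i = (U (i mod n) \<in> C)" for i
  define h where "h i = (V (i mod n) \<in> C)" for i
  define outer where "outer i \<longleftrightarrow>
    of_bool (f (i + n - 1)) + of_bool (f i) + of_bool (f (i + 1)) + of_bool (h i) = (1::int)" for i
  define inner where "inner i \<longleftrightarrow>
    of_bool (h i) + of_bool (f i) + of_bool (h (i + k)) + of_bool (h (i + n - k)) = (1::int)" for i
  have shift_mod: "f (i mod n + c) = f (i + c)" "h (i mod n + c) = h (i + c)" for i c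
    unfolding f_def h_def by (simp_all add: mod_add_left_eq)
  have outer_mod: "outer (i mod n) = outer i" for i
    using shift_mod[of i "n - 1"] shift_mod[of i 0] shift_mod[of i 1] n
    unfolding outer_def by simp
  have inner_mod: "inner (i mod n) = inner i" for i
    using shift_mod[of i "n - k"] shift_mod[of i 0] shift_mod[of i k] k
    unfolding inner_def by simp
  have "\<not> gp_adj n k x x" for x
    using gp_adj_irrefl n k by simp
  then have "perfect_code (gp_verts n) (gp_adj n k) C \<longleftrightarrow>
      (\<forall>x\<in>gp_verts n. \<exists>!c. c \<in> C \<and> (c = x \<or> gp_adj n k x c))"
    using perfect_code_iff_closed_nbhd[of "gp_adj n k"] C by simp
  also have "\<dots> \<longleftrightarrow> (\<forall>a<n. outer a) \<and> (\<forall>a<n. inner a)"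
  proof -
    have "(\<forall>x\<in>gp_verts n. P x) \<longleftrightarrow> (\<forall>a<n. P (U a)) \<and> (\<forall>a<n. P (V a))" for P
      unfolding gp_verts_def by blast
    then show ?thesis
      using gp_closed_nbhd_U_count[OF n] gp_closed_nbhd_V_count[OF k]
      by (simp add: outer_def inner_def f_def h_def)
  qed
  also have "\<dots> \<longleftrightarrow> (\<forall>i. outer i) \<and> (\<forall>i. inner i)"
  proof -
    have "(\<forall>a<n. P a) \<longleftrightarrow> (\<forall>i. P i)" if "\<And>i. P (i mod n) = P i" for P
      using that n by (metis mod_less_divisor not_numeral_le_zero gr_zeroI)
    from this[of outer] this[of inner] show ?thesis
      using outer_mod inner_mod by simp
  qed
  also have "\<dots> \<longleftrightarrow> gp_code_counts n k f h"
    unfolding gp_code_counts_def outer_def inner_def f_def h_def using n by simp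
  finally show ?thesis
    unfolding f_def h_def .
qed

context gp_code_counts
begin

lemma outer_count_next:
  "of_bool (f i) + of_bool (f (i + 1)) + of_bool (f (i + 2)) + of_bool (h (i + 1)) = (1::int)"
  using outer_count[of "i + 1"] by (simp add: f_periodic)

lemma inner_count_next:
  "of_bool (h (i + k)) + of_bool (f (i + k)) + of_bool (h (i + 2 * k)) + of_bool (h i) = (1::int)"
  using inner_count[of "i + k"] by (simp add: h_periodic mult_2 add.assoc)

lemma sum_f_shift: "(\<Sum>i<n. of_bool (f (i + c)) :: int) = (\<Sum>i<n. of_bool (f i))"
  by (rule sum_periodic_shift) (simp add: f_periodic)

lemma sum_h_shift: "(\<Sum>i<n. of_bool (h (i + c)) :: int) = (\<Sum>i<n. of_bool (h i))"
  by (rule sum_periodic_shift) (simp add: h_periodic)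

lemma period_eq_four_codes: "int n = 4 * (\<Sum>i<n. of_bool (f i))"
proof -
  define M where "M = (\<Sum>i<n. of_bool (f i) :: int)"
  define S where "S = (\<Sum>i<n. of_bool (h i) :: int)"
  have "(\<Sum>i<n. of_bool (f i) + of_bool (f (i + 1)) + of_bool (f (i + 2)) + of_bool (h (i + 1)))
      = (\<Sum>i<n. 1::int)"
    using outer_count_next by simp
  then have "3 * M + S = int n"
    by (simp only: sum.distrib sum_f_shift sum_h_shift flip: M_def S_def) simp
  moreover have "(\<Sum>i<n. of_bool (h (i + k)) + of_bool (f (i + k)) + of_bool (h (i + 2 * k)) + of_bool (h i))
      = (\<Sum>i<n. 1::int)"
    using inner_count_next by simp
  then have "M + 3 * S = int n"
    by (simp only: sum.distrib sum_f_shift sum_h_shift flip: M_def S_def) simp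
  ultimately show ?thesis
    unfolding M_def by linarith
qed

definition inner_pair :: "nat \<Rightarrow> int" where
  "inner_pair i = of_bool (h i \<and> h (i + 1))"

definition outer_gap :: "nat \<Rightarrow> int" where
  "outer_gap i = of_bool (f i \<and> f (i + 3))"

lemma inner_pair_periodic: "inner_pair (i + n) = inner_pair i"
  using h_periodic[of "i + 1"] by (simp add: inner_pair_def h_periodic)

lemma outer_gap_periodic: "outer_gap (i + n) = outer_gap i"
  using f_periodic[of "i + 3"] by (simp add: outer_gap_def f_periodic ac_simps)

lemma sum_inner_pair_eq_sum_outer_gap: "(\<Sum>i<n. inner_pair i) = (\<Sum>i<n. outer_gap i)"
proof -
  have "inner_pair (i + 1) - outer_gap i =
      1 - of_bool (f i) - of_bool (f (i + 1)) - of_bool (f (i + 2)) - of_bool (f (i + 3))" for i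
    unfolding inner_pair_def outer_gap_def
    by (rule of_bool_overlapping_windows[OF outer_count_next[of i]])
      (use outer_count_next[of "i + 1"] in \<open>simp add: numeral_eq_Suc\<close>)
  then have "(\<Sum>i<n. inner_pair (i + 1) - outer_gap i) =
      (\<Sum>i<n. 1 - of_bool (f i) - of_bool (f (i + 1)) - of_bool (f (i + 2)) - of_bool (f (i + 3)))"
    by (rule sum.cong[OF refl])
  also have "\<dots> = int n - 4 * (\<Sum>i<n. of_bool (f i))"
    by (simp only: sum_subtractf sum_f_shift) simp
  finally show ?thesis
    using period_eq_four_codes sum_periodic_shift[of inner_pair n 1, OF inner_pair_periodic]
    by (simp add: sum_subtractf)
qed

lemma twice_sum_inner_pair_le_sum_outer_gap: "2 * (\<Sum>i<n. inner_pair i) \<le> (\<Sum>i<n. outer_gap i)"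
proof -
  \<comment> \<open>If \<open>v(i + 1), v(i + 2)\<close> (or \<open>v(i + 1 + 2k), v(i + 2 + 2k)\<close>) are code vertices, then
    neither \<open>u(i + k + 1), u(i + k + 2)\<close> nor \<open>v(i + k + 1), v(i + k + 2)\<close> are, so
    \<open>u(i + k + 1)\<close> and \<open>u(i + k + 2)\<close> are dominated by \<open>u(i + k)\<close> and \<open>u(i + k + 3)\<close>.\<close>
  have "inner_pair (i + 1) + inner_pair (i + 1 + 2 * k) \<le> outer_gap (i + k)" for i
  proof -
    have "of_bool (h (i + k + 1)) + of_bool (f (i + k + 1)) + of_bool (h (i + 1 + 2 * k))
        + of_bool (h (i + 1)) = (1::int)"
      using inner_count_next[of "i + 1"] by (simp add: ac_simps)
    moreover have "of_bool (h (i + k + 2)) + of_bool (f (i + k + 2)) + of_bool (h (i + 1 + 2 * k + 1))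
        + of_bool (h (i + 1 + 1)) = (1::int)"
      using inner_count_next[of "i + 2"] by (simp add: ac_simps numeral_eq_Suc)
    moreover have "of_bool (f (i + k + 1)) + of_bool (f (i + k + 2)) + of_bool (f (i + k + 3))
        + of_bool (h (i + k + 2)) = (1::int)"
      using outer_count_next[of "i + k + 1"] by (simp add: ac_simps numeral_eq_Suc)
    ultimately show ?thesis
      unfolding inner_pair_def outer_gap_def
      by (rule of_bool_pairs_le_gap[OF _ _ outer_count_next[of "i + k"]])
  qed
  then have "(\<Sum>i<n. inner_pair (i + 1) + inner_pair (i + 1 + 2 * k))
      \<le> (\<Sum>i<n. outer_gap (i + k))"
    by (rule sum_mono)
  then show ?thesis
    by (simp only: sum.distrib add.assoc sum_periodic_shift[of inner_pair n, OF inner_pair_periodic]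
        sum_periodic_shift[of outer_gap n, OF outer_gap_periodic])
qed

lemma no_adjacent_inner_codes: "\<not> (h i \<and> h (i + 1))"
  and no_outer_codes_at_distance_3: "\<not> (f i \<and> f (i + 3))"
proof -
  have nonneg: "0 \<le> inner_pair i" "0 \<le> outer_gap i" for i
    by (simp_all add: inner_pair_def outer_gap_def)
  have "0 \<le> (\<Sum>i<n. inner_pair i)"
    using nonneg by (simp add: sum_nonneg)
  then have "(\<Sum>i<n. inner_pair i) = 0" "(\<Sum>i<n. outer_gap i) = 0"
    using sum_inner_pair_eq_sum_outer_gap twice_sum_inner_pair_le_sum_outer_gap by linarith+
  then have "inner_pair i = 0" "outer_gap i = 0"
    using periodic_sum_nonneg_eq_0[of n inner_pair, OF period_pos inner_pair_periodic nonneg(1)]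
      periodic_sum_nonneg_eq_0[of n outer_gap, OF period_pos outer_gap_periodic nonneg(2)] by blast+
  then show "\<not> (h i \<and> h (i + 1))" "\<not> (f i \<and> f (i + 3))"
    by (simp_all add: inner_pair_def outer_gap_def)
qed

lemma four_dvd_period: "4 dvd n"
proof -
  have "int 4 dvd int n"
    using period_eq_four_codes by simp
  then show ?thesis
    by (simp only: int_dvd_int_iff)
qed

lemma outer_code_isolated:
  assumes "f i"
  shows "\<not> f (i + 1)" "\<not> f (i + 2)" "\<not> f (i + 3)"
  using outer_count_next[of i, unfolded of_bool_sum4_eq_1_iff] no_outer_codes_at_distance_3[of i]
    assms by blast+

lemma outer_code_period_4: "f (i + 4) = f i"
  using outer_count_next[of i] outer_count_next[of "i + 1"] outer_count_next[of "i + 2"]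
    no_outer_codes_at_distance_3[of i] no_outer_codes_at_distance_3[of "i + 1"]
    no_adjacent_inner_codes[of "i + 1"] no_adjacent_inner_codes[of "i + 2"]
  by (simp add: of_bool_sum4_eq_1_iff numeral_eq_Suc) blast

lemma outer_codes_residue: "\<exists>j<4. f = (\<lambda>i. i mod 4 = j)"
proof -
  have "(\<Sum>i<n. of_bool (f i) :: int) \<noteq> 0"
    using period_eq_four_codes period_pos by linarith
  then obtain t where t: "f t"
    by (metis (full_types) of_bool_eq(1) sum.neutral)
  have f_mod_4: "f (i mod 4) = f i" for i
    using periodic_mod_eq[of f 4] outer_code_period_4 by blast
  have unique: "a = b" if "f a" "f b" "a < 4" "b < 4" for a b
  proof (rule ccontr)
    assume "a \<noteq> b"
    then have "b \<in> {a + 1, a + 2, a + 3} \<or> a \<in> {b + 1, b + 2, b + 3}"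
      using that(3,4) by auto
    then show False
      using outer_code_isolated[OF that(1)] outer_code_isolated[OF that(2)] that(1,2) by auto
  qed
  have "f i \<longleftrightarrow> i mod 4 = t mod 4" for i
    using unique[of "i mod 4" "t mod 4"] f_mod_4[of i] f_mod_4[of t] t by auto
  then show ?thesis
    by (intro exI[of _ "t mod 4"]) auto
qed

lemma inner_codes_residue:
  assumes f: "f = (\<lambda>i. i mod 4 = j)" and j: "j < 4"
  shows "h = (\<lambda>i. i mod 4 = (j + 2) mod 4)"
proof
  fix i
  have "h i \<longleftrightarrow> \<not> f (i + n - 1) \<and> \<not> f i \<and> \<not> f (i + 1)"
    using outer_count[of i, unfolded of_bool_sum4_eq_1_iff] by blast
  also have "\<dots> \<longleftrightarrow> i mod 4 = (j + 2) mod 4"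
    using residue_outer_count[OF four_dvd_period period_pos j, of i, unfolded of_bool_sum4_eq_1_iff]
    unfolding f by blast
  finally show "h i \<longleftrightarrow> i mod 4 = (j + 2) mod 4" .
qed

lemma k_odd:
  assumes f: "f = (\<lambda>i. i mod 4 = j)" and h: "h = (\<lambda>i. i mod 4 = (j + 2) mod 4)" and j: "j < 4"
  shows "odd k"
proof
  assume "even k"
  \<comment> \<open>The closed neighbourhood of \<open>v(j + 2 + k)\<close> contains the code vertex \<open>v(j + 2)\<close> and,
    \<open>k\<close> being even, also \<open>u(j + 2 + k)\<close> or \<open>v(j + 2 + k)\<close>.\<close>
  define a where "a = j + 2 + k"
  have "a + n - k = j + 2 + n"
    unfolding a_def by simp
  then have "h (a + n - k)"
    unfolding h using add_multiple_mod[OF four_dvd_period, of "j + 2"] by simp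
  moreover have "f a \<or> h a"
  proof -
    have "k mod 4 mod 2 = 0"
      using \<open>even k\<close> by (simp add: mod_mod_cancel)
    then have "k mod 4 = 0 \<or> k mod 4 = 2"
      using mod_less_divisor[of 4 k] unfolding less_4_cases by auto
    moreover have "a mod 4 = ((j + 2) mod 4 + k mod 4) mod 4"
      unfolding a_def by (rule mod_add_eq[symmetric])
    ultimately show ?thesis
      using j unfolding f h less_4_cases by (elim disjE) simp_all
  qed
  ultimately show False
    using inner_count[of a, unfolded of_bool_sum4_eq_1_iff] by blast
qed

theorem residue_pattern:
  "4 dvd n \<and> odd k \<and> (\<exists>j<4. f = (\<lambda>i. i mod 4 = j) \<and> h = (\<lambda>i. i mod 4 = (j + 2) mod 4))"
  using four_dvd_period outer_codes_residue inner_codes_residue k_odd by meson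

end

lemma gp_code_counts_residue_pattern:
  assumes "0 < n" "k \<le> n" "4 dvd n" "odd k" "j < 4"
  shows "gp_code_counts n k (\<lambda>i. i mod 4 = j) (\<lambda>i. i mod 4 = (j + 2) mod 4)"
proof
  fix i
  show "((i + n) mod 4 = j) = (i mod 4 = j)"
    and "((i + n) mod 4 = (j + 2) mod 4) = (i mod 4 = (j + 2) mod 4)"
    using add_multiple_mod[OF assms(3)] by simp_all
  show "of_bool ((i + n - 1) mod 4 = j) + of_bool (i mod 4 = j) + of_bool ((i + 1) mod 4 = j)
      + of_bool (i mod 4 = (j + 2) mod 4) = (1::int)"
    by (rule residue_outer_count[OF assms(3,1,5)])
  show "of_bool (i mod 4 = (j + 2) mod 4) + of_bool (i mod 4 = j)
      + of_bool ((i + k) mod 4 = (j + 2) mod 4) + of_bool ((i + n - k) mod 4 = (j + 2) mod 4) = (1::int)"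
    by (rule residue_inner_count[OF assms(3,2,4,5)])
qed (rule assms(1))

lemma gp_code_counts_iff_residue_pattern:
  assumes "0 < n" "k \<le> n"
  shows "gp_code_counts n k f h \<longleftrightarrow>
    4 dvd n \<and> odd k \<and> (\<exists>j<4. f = (\<lambda>i. i mod 4 = j) \<and> h = (\<lambda>i. i mod 4 = (j + 2) mod 4))"
  using gp_code_counts.residue_pattern gp_code_counts_residue_pattern[OF assms] by blast

definition gp_residue_code :: "nat \<Rightarrow> nat \<Rightarrow> gpv set" where
  "gp_residue_code n j =
    {U ((4 * i + j) mod n) | i. i < n} \<union> {V ((4 * i + j + 2) mod n) | i. i < n}"

lemma U_mem_gp_residue_code:
  assumes "4 dvd n" "j < 4"
  shows "U x \<in> gp_residue_code n j \<longleftrightarrow> x < n \<and> x mod 4 = j"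
proof
  assume "U x \<in> gp_residue_code n j"
  then obtain i where "x = (4 * i + j) mod n" "i < n"
    unfolding gp_residue_code_def by blast
  then show "x < n \<and> x mod 4 = j"
    using assms by (simp add: mod_mod_cancel)
next
  assume x: "x < n \<and> x mod 4 = j"
  then have "x = (4 * (x div 4) + j) mod n" "x div 4 < n"
    using div_mult_mod_eq[of x 4] by (simp_all add: mult.commute)
  then show "U x \<in> gp_residue_code n j"
    unfolding gp_residue_code_def by blast
qed

lemma V_mem_gp_residue_code:
  assumes "4 dvd n" "0 < n" "j < 4"
  shows "V x \<in> gp_residue_code n j \<longleftrightarrow> x < n \<and> x mod 4 = (j + 2) mod 4"
proof
  assume "V x \<in> gp_residue_code n j"
  then obtain i where "x = (4 * i + j + 2) mod n" "i < n"
    unfolding gp_residue_code_def by blast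
  moreover have "(4 * i + j + 2) mod 4 = (j + 2) mod 4"
    using mod_mult_self2[of "j + 2" 4 i] by (simp add: ac_simps)
  ultimately show "x < n \<and> x mod 4 = (j + 2) mod 4"
    using assms by (simp add: mod_mod_cancel)
next
  assume x: "x < n \<and> x mod 4 = (j + 2) mod 4"
  have "4 \<le> n"
    using assms(1,2) by (auto elim!: dvdE)
  then have le: "j + 2 \<le> x + 2 * n"
    using assms(3) by linarith
  have "(x + 2 * n) mod 4 = (j + 2) mod 4"
    using x add_multiple_mod[of 4 "2 * n" x] assms(1) by simp
  then have "4 dvd x + 2 * n - (j + 2)"
    using mod_eq_dvd_iff_nat[OF le] by blast
  then obtain i where i: "x + 2 * n - (j + 2) = 4 * i"
    by (elim dvdE)
  then have "4 * i + j + 2 = x + 2 * n"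
    using le by linarith
  then have "(4 * i + j + 2) mod n = x"
    using x by simp
  moreover have "i < n"
    using i x by linarith
  ultimately show "V x \<in> gp_residue_code n j"
    unfolding gp_residue_code_def by blast
qed

lemma gp_residue_code_eq_iff:
  assumes C: "C \<subseteq> gp_verts n" and n: "4 dvd n" "0 < n" and j: "j < 4"
  shows "C = gp_residue_code n j \<longleftrightarrow>
    (\<lambda>i. U (i mod n) \<in> C) = (\<lambda>i. i mod 4 = j) \<and>
    (\<lambda>i. V (i mod n) \<in> C) = (\<lambda>i. i mod 4 = (j + 2) mod 4)"
    (is "_ \<longleftrightarrow> ?pattern")
proof
  assume "C = gp_residue_code n j"
  then show ?pattern
    using U_mem_gp_residue_code[OF n(1) j] V_mem_gp_residue_code[OF n j] n
    by (simp add: mod_mod_cancel)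
next
  assume ?pattern
  then have U: "U (i mod n) \<in> C \<longleftrightarrow> i mod 4 = j"
    and V: "V (i mod n) \<in> C \<longleftrightarrow> i mod 4 = (j + 2) mod 4" for i
    unfolding fun_eq_iff by blast+
  have "U x \<in> C \<longleftrightarrow> x < n \<and> x mod 4 = j"
    and "V x \<in> C \<longleftrightarrow> x < n \<and> x mod 4 = (j + 2) mod 4" for x
    using C U[of x] V[of x] unfolding gp_verts_def by auto
  then show "C = gp_residue_code n j"
    using U_mem_gp_residue_code[OF n(1) j] V_mem_gp_residue_code[OF n j]
    by (intro set_eqI) (metis gpv.exhaust)
qed

theorem theorem1p1:
  fixes n k :: nat and C :: "gpv set"
  assumes "n \<ge> 3" and "0 < k" and "k < n" and "(2 * k) mod n \<noteq> 0"
    and "C \<subseteq> gp_verts n"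
  shows "perfect_code (gp_verts n) (gp_adj n k) C \<longleftrightarrow>
    (n mod 4 = 0 \<and> k mod 2 = 1 \<and>
     (\<exists>j\<in>{0,1,2,3::nat}. C = {U ((4 * i + j) mod n) | i. i < n}
                            \<union> {V ((4 * i + j + 2) mod n) | i. i < n}))"
proof -
  have n: "0 < n" using assms(1) by simp
  have "perfect_code (gp_verts n) (gp_adj n k) C \<longleftrightarrow>
      gp_code_counts n k (\<lambda>i. U (i mod n) \<in> C) (\<lambda>i. V (i mod n) \<in> C)"
    using perfect_code_gp_iff_counts assms by blast
  also have "\<dots> \<longleftrightarrow> 4 dvd n \<and> odd k \<and> (\<exists>j<4. C = gp_residue_code n j)"
    using gp_code_counts_iff_residue_pattern[OF n less_imp_le[OF assms(3)]]
      gp_residue_code_eq_iff[OF assms(5) _ n] by blast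
  also have "\<dots> \<longleftrightarrow> n mod 4 = 0 \<and> k mod 2 = 1 \<and> (\<exists>j\<in>{0, 1, 2, 3}. C = gp_residue_code n j)"
  proof -
    have "(\<exists>j<4. P j) \<longleftrightarrow> (\<exists>j\<in>{0, 1, 2, 3::nat}. P j)" for P
      by (auto simp: less_4_cases)
    then show ?thesis
      by (simp only: dvd_eq_mod_eq_0[of 4 n] odd_iff_mod_2_eq_one)
  qed
  finally show ?thesis
    unfolding gp_residue_code_def .
qed

end
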